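(* Let $n$ be a positive integer, $q=2^n$, $k$ an integer with $1\le k\le n-1$, and $d=\gcd(n,k)$. For $\alpha,\beta,\gamma\in\mathbb{F}_q$ define $$S(\alpha,\beta,\gamma)=\sum_{x\in\mathbb{F}_q}(-1)^{\mathrm{Tr}_1^n\left(\alpha x^{2^{2k}+1}+\beta x^{2^k+1}+\gamma x\right)}.$$ Then $$\sum_{\alpha,\beta,\gamma\in\mathbb{F}_q}S(\alpha,\beta,\gamma)^3=(2^{n+d}+2^n-2^d)\cdot 2^{3n}.$$ Equivalently, the number of triples $(x,y,z)\in\mathbb{F}_q^3$ with $x+y+z=0$, $x^{2^k+1}+y^{2^k+1}+z^{2^k+1}=0$ and $x^{2^{2k}+1}+y^{2^{2k}+1}+z^{2^{2k}+1}=0$ equals $2^{n+d}+2^n-2^d$.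
   Context: $\mathrm{Tr}_1^n:\mathbb{F}_{2^n}\to\mathbb{F}_2$ is the absolute trace $x\mapsto\sum_{i=0}^{n-1}x^{2^i}$. *)

theory Defs
  imports Main "HOL-Library.Cardinality"
begin

text \<open>Absolute trace of F_{2^n} to F_2 (values 0 or 1 in the field itself).\<close>
definition abs_trace :: "nat \<Rightarrow> 'a::field \<Rightarrow> 'a" where
  "abs_trace n x = (\<Sum>i<n. x ^ (2 ^ i))"

definition add_char :: "nat \<Rightarrow> 'a::field \<Rightarrow> int" where
  "add_char n x = (if abs_trace n x = 0 then 1 else -1)"

definition S_sum :: "nat \<Rightarrow> nat \<Rightarrow> 'a::{field,finite} \<Rightarrow> 'a \<Rightarrow> 'a \<Rightarrow> int" where
  "S_sum n k \<alpha> \<beta> \<gamma> =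
     (\<Sum>x\<in>(UNIV::'a set). add_char n (\<alpha> * x ^ (2 ^ (2 * k) + 1) + \<beta> * x ^ (2 ^ k + 1) + \<gamma> * x))"

end

theory Submission
  imports Defs "HOL-Computational_Algebra.Polynomial"
begin

text \<open>
  Expanding the cube and summing
  over \<open>\<alpha>, \<beta>, \<gamma>\<close> first, orthogonality of \<open>\<chi>\<close> shows that the third moment
  \<open>\<Sum>\<alpha>\<beta>\<gamma>. S(\<alpha>,\<beta>,\<gamma>)^3\<close> equals \<open>|F|^3\<close> times the number \<open>N\<close> of triples \<open>(x,y,z)\<close> on which
  the power sums of exponents \<open>1\<close>, \<open>2^k+1\<close>, \<open>2^2k+1\<close> all vanish.  In characteristic 2 such a
  triple has \<open>z = x + y\<close> and \<open>x^(2^j) y + x y^(2^j) = 0\<close> for \<open>j = k, 2k\<close>; for \<open>x \<noteq> 0\<close> the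
  substitution \<open>y = x u\<close> turns this into \<open>u^(2^k) = u\<close>, i.e. \<open>u\<close> lies in the subfield of
  order \<open>2^gcd(n,k)\<close>.  Hence \<open>N = |F| + (|F| - 1) 2^gcd(n,k)\<close>.
\<close>

lemma sum_product3:
  "(\<Sum>a\<in>A. f a) * (\<Sum>b\<in>B. g b) * (\<Sum>c\<in>C. h c) =
   (\<Sum>a\<in>A. \<Sum>b\<in>B. \<Sum>c\<in>C. f a * g b * (h c :: 'a::comm_semiring_0))"
  unfolding sum_product by (simp add: sum_distrib_right) (rule sum.cong[OF refl], rule sum.swap)

lemma sum_swap3:
  "(\<Sum>a\<in>A. \<Sum>b\<in>B. \<Sum>c\<in>C. \<Sum>x\<in>X. \<Sum>y\<in>Y. \<Sum>z\<in>Z. f a b c x y z) =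
   (\<Sum>x\<in>X. \<Sum>y\<in>Y. \<Sum>z\<in>Z. \<Sum>a\<in>A. \<Sum>b\<in>B. \<Sum>c\<in>C. (f a b c x y z :: 'a::comm_monoid_add))"
proof -
  have swap1: "(\<Sum>a\<in>U. \<Sum>x\<in>X. \<Sum>y\<in>Y. \<Sum>z\<in>Z. g a x y z) =
     (\<Sum>x\<in>X. \<Sum>y\<in>Y. \<Sum>z\<in>Z. \<Sum>a\<in>U. (g a x y z :: 'a))" for U and g :: "_ \<Rightarrow> _"
    by (subst sum.swap, subst (2) sum.swap, subst (3) sum.swap) (rule refl)
  show ?thesis by (simp only: swap1)
qed

lemma of_nat_card_eq_0: "of_nat CARD('a::{ring_1,finite}) = (0::'a)"
proof -
  have "(\<Sum>x\<in>UNIV. x + (1::'a)) = (\<Sum>x\<in>UNIV. x)"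
    by (rule sum.reindex_bij_witness[of _ "\<lambda>x. x - 1" "\<lambda>x. x + 1"]) auto
  thus ?thesis by (simp add: sum.distrib)
qed

lemma char2_add_self:
  fixes x :: "'a::comm_ring_1" assumes "(2::'a) = 0" shows "x + x = 0"
  by (metis assms mult_2 mult_zero_left)

lemma char2_add_eq_0_iff:
  fixes x y :: "'a::comm_ring_1" assumes "(2::'a) = 0" shows "x + y = 0 \<longleftrightarrow> x = y"
  by (metis add_diff_cancel_right' assms char2_add_self diff_0 minus_unique)

lemma char2_frobenius:
  fixes x y :: "'a::comm_ring_1" assumes "(2::'a) = 0"
  shows "(x + y) ^ (2 ^ i) = x ^ (2 ^ i) + y ^ (2 ^ i)"
proof (induction i)
  case (Suc i)
  have square: "(a + b) ^ 2 = a ^ 2 + b ^ 2" for a b :: 'a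
    using assms by (simp add: power2_sum)
  have "(x + y) ^ (2 ^ Suc i) = ((x + y) ^ (2 ^ i)) ^ 2"
    by (simp add: power_mult[symmetric] mult.commute)
  also have "\<dots> = (x ^ (2 ^ i)) ^ 2 + (y ^ (2 ^ i)) ^ 2"
    by (simp add: Suc square)
  also have "\<dots> = x ^ (2 ^ Suc i) + y ^ (2 ^ Suc i)"
    by (simp add: power_mult[symmetric] mult.commute)
  finally show ?case .
qed simp

lemma char2_frobenius_sum:
  fixes f :: "'b \<Rightarrow> 'a::comm_ring_1" assumes "(2::'a) = 0"
  shows "(\<Sum>i\<in>A. f i) ^ (2 ^ j) = (\<Sum>i\<in>A. f i ^ (2 ^ j))"
  by (induction A rule: infinite_finite_induct) (simp_all add: char2_frobenius[OF assms] zero_power)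

definition frob_form :: "nat \<Rightarrow> 'a::comm_semiring_1 \<Rightarrow> 'a \<Rightarrow> 'a" where
  "frob_form j x y = x ^ (2 ^ j) * y + x * y ^ (2 ^ j)"

lemma char2_power_sum_of_sum:
  fixes x y :: "'a::comm_ring_1" assumes "(2::'a) = 0"
  shows "x ^ (2 ^ j + 1) + y ^ (2 ^ j + 1) + (x + y) ^ (2 ^ j + 1) = frob_form j x y"
proof -
  have "(x + y) ^ (2 ^ j + 1) = (x ^ (2 ^ j) + y ^ (2 ^ j)) * (x + y)"
    by (simp add: char2_frobenius[OF assms])
  hence "x ^ (2 ^ j + 1) + y ^ (2 ^ j + 1) + (x + y) ^ (2 ^ j + 1)
     = (x ^ (2 ^ j + 1) + x ^ (2 ^ j + 1)) + (y ^ (2 ^ j + 1) + y ^ (2 ^ j + 1))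
       + (x ^ (2 ^ j) * y + x * y ^ (2 ^ j))"
    by (simp add: algebra_simps)
  thus ?thesis by (simp add: char2_add_self[OF assms] frob_form_def)
qed

lemma power_fixed_iterate:
  fixes u :: "'a::monoid_mult"
  assumes "u ^ (b ^ a) = u" shows "u ^ (b ^ (a * c)) = u"
proof (induction c)
  case (Suc c)
  have "u ^ (b ^ (a * Suc c)) = (u ^ (b ^ (a * c))) ^ (b ^ a)"
    by (simp add: power_add power_mult[symmetric] mult.commute)
  thus ?case using Suc assms by simp
qed simp

lemma power_fixed_gcd:
  fixes u :: "'a::monoid_mult"
  assumes fixed_n: "u ^ (b ^ n) = u" and "0 < k"
  shows "u ^ (b ^ k) = u \<longleftrightarrow> u ^ (b ^ gcd n k) = u"
proof
  assume fixed_k: "u ^ (b ^ k) = u"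
  obtain x y where bezout: "k * x = n * y + gcd k n"
    using bezout_nat[of k n] assms(2) by auto
  have "u ^ (b ^ gcd n k) = (u ^ (b ^ (n * y))) ^ (b ^ gcd n k)"
    using power_fixed_iterate[OF fixed_n] by simp
  also have "\<dots> = u ^ (b ^ (k * x))"
    by (simp add: bezout gcd.commute power_mult[symmetric] power_add[symmetric])
  also have "\<dots> = u" by (rule power_fixed_iterate[OF fixed_k])
  finally show "u ^ (b ^ gcd n k) = u" .
next
  assume "u ^ (b ^ gcd n k) = u"
  moreover obtain c where "k = gcd n k * c" by (meson gcd_dvd2 dvdE)
  ultimately show "u ^ (b ^ k) = u" using power_fixed_iterate by metis
qed

lemma power_minus_one_dvd: "(m::nat) - 1 dvd m ^ c - 1"
proof (cases "m = 0")
  case False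
  hence "int (m - 1) dvd int (m ^ c - 1)"
    by (simp add: of_nat_diff power_diff_1_eq)
  thus ?thesis by (simp only: of_nat_dvd_iff)
qed (cases c; simp)

text \<open>A polynomial bound gives at most \<open>e\<close> roots of \<open>x^e = 1\<close>;
  when \<open>e\<close> divides \<open>|F| - 1\<close> the remaining nonzero elements are roots of a polynomial of degree
  \<open>|F| - 1 - e\<close>, which forces exactly \<open>e\<close> roots.\<close>

lemma finite_field_fermat:
  fixes x :: "'a::{field,finite}" assumes "x \<noteq> 0"
  shows "x ^ (CARD('a) - 1) = 1"
proof -
  let ?U = "UNIV - {0::'a}"
  have "(\<Prod>y\<in>?U. x * y) = (\<Prod>y\<in>?U. y)"
    by (rule prod.reindex_bij_witness[of _ "\<lambda>y. y / x" "\<lambda>y. x * y"]) (use assms in auto)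
  hence "x ^ card ?U * (\<Prod>y\<in>?U. y) = 1 * (\<Prod>y\<in>?U. y)"
    by (simp add: prod.distrib)
  hence "x ^ card ?U = 1" by (subst (asm) mult_cancel_right) simp
  thus ?thesis by (simp add: card_Diff_singleton)
qed

lemma card_roots_of_unity_le:
  assumes "0 < e" shows "card {x::'a::idom. x ^ e = 1} \<le> e"
proof -
  define p :: "'a poly" where "p = monom 1 e - 1"
  have "coeff p e = 1" using assms by (simp add: p_def)
  hence "p \<noteq> 0" by auto
  hence "card {x. poly p x = 0} \<le> degree p" by (rule card_poly_roots_bound)
  also have "degree p \<le> e"
    unfolding p_def by (intro degree_diff_le degree_monom_le) simp
  finally show ?thesis by (simp add: p_def poly_monom)
qed

lemma card_roots_geometric_le:
  assumes "0 < e" "0 < t"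
  shows "card {x::'a::idom. (\<Sum>j<t. (x ^ e) ^ j) = 0} \<le> e * (t - 1)"
proof -
  define p :: "'a poly" where "p = (\<Sum>j<t. monom 1 (e * j))"
  have "coeff p 0 = (\<Sum>j<t. if e * j = 0 then 1 else 0)"
    unfolding p_def coeff_sum coeff_monom by (intro sum.cong) auto
  also have "\<dots> = 1" using assms by simp
  finally have "p \<noteq> 0" by auto
  hence "card {x. poly p x = 0} \<le> degree p" by (rule card_poly_roots_bound)
  also have "degree p \<le> e * (t - 1)"
    unfolding p_def by (intro degree_sum_le) (auto intro!: order.trans[OF degree_monom_le])
  finally show ?thesis by (simp add: p_def poly_sum poly_monom power_mult)
qed

lemma card_field_ge_2: "2 \<le> CARD('a::{field,finite})"
proof -
  have "card {0, 1::'a} \<le> CARD('a)" by (rule card_mono) simp_all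
  thus ?thesis by simp
qed

lemma card_roots_of_unity:
  assumes "e dvd CARD('a::{field,finite}) - 1" "0 < e"
  shows "card {x::'a. x ^ e = 1} = e"
proof -
  obtain t where t: "CARD('a) - 1 = e * t" using assms(1) by blast
  define K where "K = {x::'a. x ^ e = 1}"
  define Z where "Z = {x::'a. (\<Sum>j<t. (x ^ e) ^ j) = 0}"
  have "0 < t" using t card_field_ge_2[where 'a = 'a] by (cases t) auto
  have "UNIV - {0} \<subseteq> K \<union> Z"
  proof
    fix x :: 'a assume "x \<in> UNIV - {0}"
    hence "(x ^ e) ^ t = 1" using finite_field_fermat[of x] t by (simp add: power_mult)
    hence "(x ^ e - 1) * (\<Sum>j<t. (x ^ e) ^ j) = 0" by (simp add: power_diff_1_eq[symmetric])
    thus "x \<in> K \<union> Z" unfolding K_def Z_def by auto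
  qed
  hence "card (UNIV - {0::'a}) \<le> card (K \<union> Z)" by (intro card_mono) simp_all
  also have "\<dots> \<le> card K + card Z" by (rule card_Un_le)
  also have "card Z \<le> e * (t - 1)"
    unfolding Z_def by (rule card_roots_geometric_le) (use assms \<open>0 < t\<close> in auto)
  finally have "e * t \<le> card K + e * (t - 1)" using t by (simp add: card_Diff_singleton)
  moreover have "e * t = e * (t - 1) + e" using \<open>0 < t\<close> by (cases t) simp_all
  moreover have "card K \<le> e" unfolding K_def by (rule card_roots_of_unity_le[OF assms(2)])
  ultimately show ?thesis unfolding K_def by linarith
qed

lemma card_power_fixed_points:
  assumes "e dvd CARD('a::{field,finite}) - 1" "0 < e"
  shows "card {x::'a. x ^ Suc e = x} = Suc e"
proof -
  have "{x::'a. x ^ Suc e = x} = insert 0 {x. x ^ e = 1}" by auto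
  moreover have "0 \<notin> {x::'a. x ^ e = 1}" using assms(2) by (simp add: zero_power)
  ultimately show ?thesis using card_roots_of_unity[OF assms] by simp
qed

definition power_sum3 :: "nat \<Rightarrow> 'a \<Rightarrow> 'a \<Rightarrow> 'a \<Rightarrow> 'a::comm_semiring_1" where
  "power_sum3 m x y z = x ^ m + y ^ m + z ^ m"

definition common_zero :: "nat \<Rightarrow> 'a::comm_semiring_1 \<Rightarrow> 'a \<Rightarrow> 'a \<Rightarrow> bool" where
  "common_zero k x y z \<longleftrightarrow> power_sum3 1 x y z = 0 \<and>
     power_sum3 (2 ^ k + 1) x y z = 0 \<and> power_sum3 (2 ^ (2 * k) + 1) x y z = 0"

context
  fixes n :: nat
  assumes card_eq: "CARD('a::{field,finite}) = 2 ^ n" and n_pos: "1 \<le> n"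
begin

lemma two_eq_zero: "(2::'a) = 0"
  using of_nat_card_eq_0[where 'a = 'a] card_eq by simp

lemma power_card: "(x::'a) ^ (2 ^ n) = x"
proof (cases "x = 0")
  case False
  have "x ^ (2 ^ n) = x * x ^ (CARD('a) - 1)"
    using card_eq by (simp flip: power_Suc)
  thus ?thesis using finite_field_fermat[OF False] by simp
qed (use n_pos in simp)

lemma card_fixed_points_of_divisor:
  assumes "d dvd n" "0 < d"
  shows "card {u::'a. u ^ (2 ^ d) = u} = 2 ^ d"
proof -
  obtain c where "n = d * c" using assms(1) by blast
  hence "2 ^ d - 1 dvd CARD('a) - 1"
    using card_eq power_minus_one_dvd[of "2 ^ d" c] by (simp add: power_mult)
  moreover have "0 < 2 ^ d - (1::nat)" using assms(2) one_less_power[of "2::nat" d] by simp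
  ultimately have "card {u::'a. u ^ Suc (2 ^ d - 1) = u} = Suc (2 ^ d - 1)"
    by (rule card_power_fixed_points)
  thus ?thesis by simp
qed

lemma trace_add: "abs_trace n ((x::'a) + y) = abs_trace n x + abs_trace n y"
  unfolding abs_trace_def by (simp add: char2_frobenius[OF two_eq_zero] sum.distrib)

text \<open>The trace is invariant under squaring, hence takes only the values 0 and 1.\<close>

lemma trace_square: "abs_trace n (x::'a) ^ 2 = abs_trace n x"
proof -
  let ?g = "\<lambda>i. x ^ (2 ^ i)"
  have "abs_trace n x ^ 2 = (\<Sum>i<n. ?g (Suc i))"
    unfolding abs_trace_def char2_frobenius_sum[OF two_eq_zero, where j = 1, simplified]
    by (simp add: power_mult[symmetric] mult.commute)
  also have "\<dots> = (\<Sum>i<Suc n. ?g i) - ?g 0"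
    by (subst sum.lessThan_Suc_shift) simp
  also have "\<dots> = (\<Sum>i<n. ?g i) + ?g n - ?g 0" by simp
  also have "\<dots> = abs_trace n x" by (simp add: power_card abs_trace_def)
  finally show ?thesis .
qed

lemma trace_0_or_1: "abs_trace n (x::'a) = 0 \<or> abs_trace n x = 1"
proof -
  have "abs_trace n x * (abs_trace n x - 1) = 0"
    using trace_square[of x] by (simp add: power2_eq_square algebra_simps)
  thus ?thesis by simp
qed

text \<open>The trace is a polynomial function of degree \<open>2^(n-1) < CARD('a)\<close>, so it is not
  identically zero.\<close>

lemma trace_nonzero_somewhere: "\<exists>x::'a. abs_trace n x \<noteq> 0"
proof -
  define p :: "'a poly" where "p = (\<Sum>i<n. monom 1 (2 ^ i))"
  have "coeff p (2 ^ (n - 1)) = (\<Sum>i<n. if i = n - 1 then 1 else 0)"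
    unfolding p_def coeff_sum coeff_monom by (intro sum.cong) auto
  also have "\<dots> = 1" using n_pos by simp
  finally have "p \<noteq> 0" by auto
  hence "card {x. poly p x = 0} \<le> degree p" by (rule card_poly_roots_bound)
  also have "degree p \<le> 2 ^ (n - 1)"
    unfolding p_def by (intro degree_sum_le) (auto intro!: order.trans[OF degree_monom_le])
  also have "\<dots> < CARD('a)" using card_eq n_pos by simp
  finally have "{x. poly p x = 0} \<noteq> UNIV" by auto
  moreover have "poly p x = abs_trace n x" for x
    unfolding p_def abs_trace_def by (simp add: poly_sum poly_monom)
  ultimately show ?thesis by auto
qed

lemma add_char_add: "add_char n ((x::'a) + y) = add_char n x * add_char n y"
  using trace_0_or_1[of x] trace_0_or_1[of y] char2_add_self[OF two_eq_zero, of 1]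
  by (auto simp: add_char_def trace_add)

lemma add_char_sum_eq_0: "(\<Sum>x\<in>UNIV. add_char n (x::'a)) = 0"
proof -
  obtain a :: 'a where "abs_trace n a \<noteq> 0" using trace_nonzero_somewhere by blast
  hence "add_char n a = -1" by (simp add: add_char_def)
  moreover have "(\<Sum>x\<in>UNIV. add_char n (x + a)) = (\<Sum>x\<in>UNIV. add_char n (x::'a))"
    by (rule sum.reindex_bij_witness[of _ "\<lambda>x. x - a" "\<lambda>x. x + a"]) auto
  ultimately have "- (\<Sum>x\<in>UNIV. add_char n (x::'a)) = (\<Sum>x\<in>UNIV. add_char n (x::'a))"
    by (simp add: add_char_add sum_negf)
  thus ?thesis by simp
qed

lemma add_char_orthogonality:
  "(\<Sum>\<alpha>\<in>UNIV. add_char n (\<alpha> * (t::'a))) = (if t = 0 then int CARD('a) else 0)"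
proof (cases "t = 0")
  case True thus ?thesis by (simp add: add_char_def abs_trace_def zero_power)
next
  case False
  have "(\<Sum>\<alpha>\<in>UNIV. add_char n (\<alpha> * t)) = (\<Sum>x\<in>UNIV. add_char n (x::'a))"
    by (rule sum.reindex_bij_witness[of _ "\<lambda>x. x / t" "\<lambda>x. x * t"]) (use False in auto)
  thus ?thesis using add_char_sum_eq_0 False by simp
qed

text \<open>Multiplicativity of the character expands the cube of \<open>S\<close> into a sum over triples.\<close>

lemma S_sum_cube:
  "S_sum n k \<alpha> \<beta> \<gamma> ^ 3 = (\<Sum>x\<in>UNIV. \<Sum>y\<in>UNIV. \<Sum>z\<in>UNIV.
     add_char n (\<alpha> * power_sum3 (2 ^ (2 * k) + 1) x y (z::'a)) *
     add_char n (\<beta> * power_sum3 (2 ^ k + 1) x y z) * add_char n (\<gamma> * power_sum3 1 x y z))"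
proof -
  define f where "f x = \<alpha> * x ^ (2 ^ (2 * k) + 1) + \<beta> * x ^ (2 ^ k + 1) + \<gamma> * (x::'a)" for x
  have split: "f x + f y + f z = \<alpha> * power_sum3 (2 ^ (2 * k) + 1) x y z +
      \<beta> * power_sum3 (2 ^ k + 1) x y z + \<gamma> * power_sum3 1 x y z" for x y z
    unfolding f_def power_sum3_def by (simp add: algebra_simps)
  have "S_sum n k \<alpha> \<beta> \<gamma> ^ 3 =
      (\<Sum>x\<in>UNIV. add_char n (f x)) * (\<Sum>y\<in>UNIV. add_char n (f y)) * (\<Sum>z\<in>UNIV. add_char n (f z))"
    unfolding S_sum_def f_def by (simp add: power3_eq_cube)
  also have "\<dots> = (\<Sum>x\<in>UNIV. \<Sum>y\<in>UNIV. \<Sum>z\<in>UNIV. add_char n (f x + f y + f z))"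
    by (simp add: sum_product3 add_char_add)
  finally show ?thesis by (simp add: split add_char_add)
qed

text \<open>Orthogonality of characters turns the third moment into a count of common zeros.\<close>

lemma sum_S_sum_cube:
  "(\<Sum>\<alpha>\<in>UNIV. \<Sum>\<beta>\<in>UNIV. \<Sum>\<gamma>\<in>UNIV. S_sum n k \<alpha> \<beta> (\<gamma>::'a) ^ 3) =
   int CARD('a) ^ 3 * (\<Sum>x\<in>UNIV. \<Sum>y\<in>UNIV. \<Sum>z\<in>UNIV. of_bool (common_zero k x y (z::'a)))"
proof -
  have orth: "(\<Sum>\<alpha>\<in>UNIV. \<Sum>\<beta>\<in>UNIV. \<Sum>\<gamma>\<in>UNIV.
      add_char n (\<alpha> * A) * add_char n (\<beta> * B) * add_char n (\<gamma> * (C::'a))) =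
      int CARD('a) ^ 3 * of_bool (C = 0 \<and> B = 0 \<and> A = 0)" for A B C :: 'a
    by (simp add: sum_product3[symmetric] add_char_orthogonality power3_eq_cube)
  show ?thesis
    unfolding S_sum_cube sum_swap3 orth common_zero_def
    by (simp only: sum_distrib_left)
qed

lemma common_zero_iff:
  "common_zero k x y (z::'a) \<longleftrightarrow>
     z = x + y \<and> frob_form k x y = 0 \<and> frob_form (2 * k) x y = 0"
proof -
  have "power_sum3 1 x y z = 0 \<longleftrightarrow> z = x + y"
    unfolding power_sum3_def using char2_add_eq_0_iff[OF two_eq_zero, of "x + y" z] by auto
  moreover have "power_sum3 (2 ^ j + 1) x y (x + y) = frob_form j x y" for j
    unfolding power_sum3_def by (rule char2_power_sum_of_sum[OF two_eq_zero])
  ultimately show ?thesis unfolding common_zero_def by auto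
qed

lemma frob_form_scaled:
  assumes "(x::'a) \<noteq> 0"
  shows "frob_form j x (x * u) = 0 \<longleftrightarrow> u ^ (2 ^ j) = u"
proof -
  have "frob_form j x (x * u) = (x ^ (2 ^ j) * x) * (u + u ^ (2 ^ j))"
    unfolding frob_form_def by (simp add: power_mult_distrib algebra_simps)
  moreover have "x ^ (2 ^ j) * x \<noteq> 0" using assms by simp
  ultimately show ?thesis
    using char2_add_eq_0_iff[OF two_eq_zero, of u "u ^ (2 ^ j)"] by auto
qed

text \<open>For fixed \<open>x \<noteq> 0\<close>, the \<open>y\<close> with \<open>frob_form k x y = frob_form (2k) x y = 0\<close> are \<open>x\<close> times
  the subfield of order \<open>2^gcd n k\<close>.\<close>

lemma count_for_fixed_x:
  assumes "1 \<le> k"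
  shows "(\<Sum>y\<in>UNIV. of_bool (frob_form k x y = 0 \<and> frob_form (2 * k) x (y::'a) = 0) :: int) =
         (if x = 0 then int CARD('a) else 2 ^ gcd n k)"
proof (cases "x = 0")
  case True thus ?thesis by (simp add: frob_form_def zero_power)
next
  case False
  have fixed_iff: "u ^ (2 ^ k) = u \<and> u ^ (2 ^ (2 * k)) = u \<longleftrightarrow> u ^ (2 ^ gcd n k) = (u::'a)" for u
    using power_fixed_gcd[OF power_card, of k u] power_fixed_iterate[of u 2 k 2] assms
    by (auto simp: mult.commute)
  have "(\<Sum>y\<in>UNIV. of_bool (frob_form k x y = 0 \<and> frob_form (2 * k) x (y::'a) = 0) :: int) =
        (\<Sum>u\<in>UNIV. of_bool (frob_form k x (x * u) = 0 \<and> frob_form (2 * k) x (x * u) = 0))"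
    by (rule sum.reindex_bij_witness[of _ "\<lambda>u. x * u" "\<lambda>y. y / x"]) (use False in auto)
  also have "\<dots> = int (card {u::'a. u ^ (2 ^ gcd n k) = u})"
    by (simp add: frob_form_scaled[OF False] fixed_iff)
  also have "\<dots> = 2 ^ gcd n k"
    using card_fixed_points_of_divisor[of "gcd n k"] assms by simp
  finally show ?thesis using False by simp
qed

lemma count_common_zeros:
  assumes "1 \<le> k"
  shows "(\<Sum>x\<in>UNIV. \<Sum>y\<in>UNIV. \<Sum>z\<in>UNIV. of_bool (common_zero k x y (z::'a)) :: int) =
         int CARD('a) * 2 ^ gcd n k + int CARD('a) - 2 ^ gcd n k"
proof -
  have sum_point: "(\<Sum>z\<in>UNIV. of_bool (z = c \<and> P) :: int) = of_bool P" for c :: 'a and P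
  proof -
    have "(\<Sum>z\<in>UNIV. of_bool (z = c \<and> P) :: int) = (\<Sum>z\<in>UNIV. if z = c then of_bool P else 0)"
      by (intro sum.cong) auto
    thus ?thesis by simp
  qed
  have "(\<Sum>x\<in>UNIV. \<Sum>y\<in>UNIV. \<Sum>z\<in>UNIV. of_bool (common_zero k x y (z::'a)) :: int) =
        (\<Sum>x\<in>UNIV. \<Sum>y\<in>UNIV. of_bool (frob_form k x y = 0 \<and> frob_form (2 * k) x (y::'a) = 0))"
    by (simp only: common_zero_iff sum_point)
  also have "\<dots> = (\<Sum>x\<in>UNIV. if x = (0::'a) then int CARD('a) else 2 ^ gcd n k)"
    by (simp add: count_for_fixed_x[OF assms])
  also have "\<dots> = (\<Sum>x\<in>UNIV. 2 ^ gcd n k + (if x = (0::'a) then int CARD('a) - 2 ^ gcd n k else 0))"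
    by (intro sum.cong) auto
  also have "\<dots> = int CARD('a) * 2 ^ gcd n k + int CARD('a) - 2 ^ gcd n k"
    by (simp add: sum.distrib)
  finally show ?thesis .
qed

end

theorem lemma4:
  fixes n k d :: nat
  assumes "n \<ge> 1"
    and "CARD('a) = 2 ^ n"
    and "1 \<le> k" and "k \<le> n - 1"
    and "d = gcd n k"
  shows "(\<Sum>\<alpha>\<in>(UNIV::'a::{field,finite} set). \<Sum>\<beta>\<in>(UNIV::'a set). \<Sum>\<gamma>\<in>(UNIV::'a set).
            (S_sum n k \<alpha> \<beta> \<gamma>) ^ 3)
         = (2 ^ (n + d) + 2 ^ n - 2 ^ d) * 2 ^ (3 * n)"
proof -
  have "(\<Sum>\<alpha>\<in>(UNIV::'a set). \<Sum>\<beta>\<in>UNIV. \<Sum>\<gamma>\<in>UNIV. S_sum n k \<alpha> \<beta> \<gamma> ^ 3) =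
        int CARD('a) ^ 3 * (int CARD('a) * 2 ^ d + int CARD('a) - 2 ^ d)"
    unfolding sum_S_sum_cube[OF assms(2,1)] count_common_zeros[OF assms(2,1,3)] assms(5) ..
  also have "\<dots> = (2 ^ (n + d) + 2 ^ n - 2 ^ d) * 2 ^ (3 * n)"
    using assms(2) by (simp add: power_add power_mult algebra_simps)
  finally show ?thesis .
qed

end
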